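(* Let $k_1=(1,0)$, $k_2=(-\tfrac12,\tfrac{\sqrt3}{2})$, $k_3=(-\tfrac12,-\tfrac{\sqrt3}{2})$, $\phi(x)=\sum_{j=1}^3\cos(k_j\cdot x)$ on $\mathbb R^2$, and for $R>0$, $\varepsilon\in\mathbb R$ define the probability density \[ F_{R,\varepsilon}(x)=Z_{R,\varepsilon}^{-1}\exp\Big(\varepsilon\phi(x)-\frac{|x|^2}{2R^2}\Big),\qquad x\in\mathbb R^2, \] with $Z_{R,\varepsilon}$ the normalizing constant. Then for each sufficiently small $\varepsilon>0$ there exists $R_0(\varepsilon)<\infty$ such that for all $R\ge R_0(\varepsilon)$, \[ \mathcal I[F_{R,\varepsilon}]\mathcal D[F_{R,\varepsilon}]-\mathcal Q[F_{R,\varepsilon}]^2<0. \]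
   Context: For a smooth positive probability density $f=e^u$ on $\mathbb R^d$ with sufficient decay, $\mathsf H_f=-\nabla^2u$ and $\mathcal I[f]=\int\operatorname{tr}(\mathsf H_f)f\,dx$, $\mathcal Q[f]=\int\operatorname{tr}(\mathsf H_f^2)f\,dx$, $\mathcal D[f]=\int(|\nabla\mathsf H_f|^2+2\operatorname{tr}(\mathsf H_f^3))f\,dx$, where $|\nabla\mathsf H_f|^2=\sum_{i,j,k}(\partial_k(\mathsf H_f)_{ij})^2$. *)

theory Defs
  imports "HOL-Analysis.Analysis"
begin

definition pd :: "'n::finite \<Rightarrow> (real^'n \<Rightarrow> real) \<Rightarrow> real^'n \<Rightarrow> real" where
  "pd i g x = deriv (\<lambda>t. g (x + t *\<^sub>R axis i 1)) 0"

definition Hf :: "(real^'n::finite \<Rightarrow> real) \<Rightarrow> 'n \<Rightarrow> 'n \<Rightarrow> real^'n \<Rightarrow> real" where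
  "Hf f i j x = - pd i (pd j (\<lambda>y. ln (f y))) x"

definition Ifun :: "(real^'n::finite \<Rightarrow> real) \<Rightarrow> real" where
  "Ifun f = (\<integral>x. (\<Sum>i\<in>UNIV. Hf f i i x) * f x \<partial>lborel)"

definition Qfun :: "(real^'n::finite \<Rightarrow> real) \<Rightarrow> real" where
  "Qfun f = (\<integral>x. (\<Sum>i\<in>UNIV. \<Sum>j\<in>UNIV. Hf f i j x * Hf f j i x) * f x \<partial>lborel)"

definition Dfun :: "(real^'n::finite \<Rightarrow> real) \<Rightarrow> real" where
  "Dfun f = (\<integral>x. ((\<Sum>i\<in>UNIV. \<Sum>j\<in>UNIV. \<Sum>k\<in>UNIV. (pd k (Hf f i j) x)\<^sup>2)
      + 2 * (\<Sum>i\<in>UNIV. \<Sum>j\<in>UNIV. \<Sum>k\<in>UNIV. Hf f i j x * Hf f j k x * Hf f k i x)) * f x \<partial>lborel)"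

definition kvec1 :: "real^2" where "kvec1 = vector [1, 0]"
definition kvec2 :: "real^2" where "kvec2 = vector [-1/2, sqrt 3 / 2]"
definition kvec3 :: "real^2" where "kvec3 = vector [-1/2, - sqrt 3 / 2]"

definition phi_hex :: "real^2 \<Rightarrow> real" where
  "phi_hex x = cos (kvec1 \<bullet> x) + cos (kvec2 \<bullet> x) + cos (kvec3 \<bullet> x)"

definition Zconst :: "real \<Rightarrow> real \<Rightarrow> real" where
  "Zconst R \<epsilon> = (\<integral>x. exp (\<epsilon> * phi_hex x - (norm x)\<^sup>2 / (2 * R\<^sup>2)) \<partial>lborel)"

definition Fdens :: "real \<Rightarrow> real \<Rightarrow> real^2 \<Rightarrow> real" where
  "Fdens R \<epsilon> x = exp (\<epsilon> * phi_hex x - (norm x)\<^sup>2 / (2 * R\<^sup>2)) / Zconst R \<epsilon>"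

end

theory Submission
  imports Defs "HOL-Probability.Characteristic_Functions" "HOL-Real_Asymp.Real_Asymp"
begin

(*
  Write F = exp (eps phi) G_R / Z with G_R the centred Gaussian of variance R^2. Then
  ln F = eps phi - |x|^2 / (2 R^2) + const, so H_f = eps A + rho I with rho = R^-2 and
  A = -Hess phi = (SUM m. k_m k_m^T cos (k_m . x)). Hence I, Q and D are quotients of Gaussian
  means <G exp (eps phi)> of trigonometric polynomials G, with coefficients polynomial in eps and
  rho. As R -> infinity the Gaussian mean of cos (p . x) tends to [p = 0], and expanding
  exp (eps phi) to a fixed Taylor order, with a remainder bounded uniformly in R, determines each
  of these means up to O(eps^k) + o(1). With a = <phi exp (eps phi)> / eps,
  b = <(|grad A|^2 + 2 eps tr A^3) exp (eps phi)> and v = <tr A^2 exp (eps phi)> this gives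
  <exp (eps phi)>^2 (I D - Q^2) = eps^4 (a b - v^2) + O(rho) with a b - v^2 = -9 eps / 32 + O(eps^2),
  which is negative for eps <= 10^-5 and rho <= eps^6.
*)

section \<open>Gaussian integrals on Euclidean space\<close>

lemma integrable_std_gaussian_iexp:
  "integrable lborel (\<lambda>x. complex_of_real (exp (- x\<^sup>2 / 2)) * iexp (t * x))"
proof -
  interpret std_normal: prob_space std_normal_distribution
    by (rule prob_space_normal_density) simp
  have "integrable std_normal_distribution (\<lambda>x. iexp (t * x))"
    by (rule std_normal.integrable_const_bound[where B=1]) auto
  then have "integrable lborel (\<lambda>x. std_normal_density x *\<^sub>R iexp (t * x))"
    by (subst (asm) integrable_density) (auto simp: normal_density_nonneg)
  then have "integrable lborel (\<lambda>x. sqrt (2*pi) *\<^sub>R (std_normal_density x *\<^sub>R iexp (t * x)))"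
    by (rule integrable_scaleR_right)
  then show ?thesis
    by (simp add: std_normal_density_def scaleR_conv_of_real)
qed

lemma integral_std_gaussian_iexp:
  "(\<integral>x. complex_of_real (exp (- x\<^sup>2 / 2)) * iexp (t * x) \<partial>lborel)
     = complex_of_real (sqrt (2*pi) * exp (- t\<^sup>2 / 2))"
proof -
  have "char std_normal_distribution t = (\<integral>x. std_normal_density x *\<^sub>R iexp (t * x) \<partial>lborel)"
    unfolding char_def by (subst integral_density) (auto simp: normal_density_nonneg)
  also have "\<dots> = complex_of_real (1 / sqrt (2*pi)) *
      (\<integral>x. complex_of_real (exp (- x\<^sup>2 / 2)) * iexp (t * x) \<partial>lborel)"
    by (simp add: std_normal_density_def scaleR_conv_of_real mult.assoc)
  finally show ?thesis
    by (simp add: char_std_normal_distribution field_simps)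
qed

(* Stated in the shape produced by substituting y = R x. *)
lemma gaussian_iexp_rescale:
  assumes "R > 0"
  shows "(\<lambda>x. complex_of_real (exp (- ((R * x)\<^sup>2 / (2 * R\<^sup>2)))) *
           exp (\<i> * (complex_of_real a * (complex_of_real R * complex_of_real x))))
       = (\<lambda>x. complex_of_real (exp (- x\<^sup>2 / 2)) * iexp ((a * R) * x))"
  using assms by (auto simp: power_mult_distrib field_simps)

lemma integrable_gaussian_iexp_1d:
  assumes "R > 0"
  shows "integrable lborel (\<lambda>y. complex_of_real (exp (- y\<^sup>2 / (2 * R\<^sup>2))) * iexp (a * y))"
  using assms integrable_std_gaussian_iexp[of "a * R"]
  by (subst lborel_integrable_real_affine_iff[of R _ 0, symmetric]) (auto simp: gaussian_iexp_rescale)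

lemma integral_gaussian_iexp_1d:
  assumes "R > 0"
  shows "(\<integral>y. complex_of_real (exp (- y\<^sup>2 / (2 * R\<^sup>2))) * iexp (a * y) \<partial>lborel)
     = complex_of_real (sqrt (2*pi) * R * exp (- (a * R)\<^sup>2 / 2))"
  using assms integral_std_gaussian_iexp[of "a * R"]
  by (subst lborel_integral_real_affine[of R _ 0]) (auto simp: gaussian_iexp_rescale scaleR_conv_of_real)

definition gaussian :: "real \<Rightarrow> 'a::euclidean_space \<Rightarrow> real" where
  "gaussian R x = exp (- (norm x)\<^sup>2 / (2 * R\<^sup>2))"

lemma gaussian_pos: "gaussian R x > 0"
  by (simp add: gaussian_def)

lemma gaussian_abs: "gaussian \<bar>R\<bar> = gaussian R"
  by (simp add: gaussian_def fun_eq_iff)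

lemma gaussian_iexp_Basis_expansion:
  "complex_of_real (gaussian R (\<Sum>b\<in>Basis. f b *\<^sub>R b)) * iexp (p \<bullet> (\<Sum>b\<in>Basis. f b *\<^sub>R b))
   = (\<Prod>b\<in>(Basis :: 'a::euclidean_space set).
        complex_of_real (exp (- (f b)\<^sup>2 / (2 * R\<^sup>2))) * iexp ((p \<bullet> b) * f b))"
proof -
  have norm_sq: "(norm (\<Sum>b\<in>(Basis :: 'a set). f b *\<^sub>R b))\<^sup>2 = (\<Sum>b\<in>Basis. (f b)\<^sup>2)"
    by (simp only: power2_norm_eq_inner)
      (simp add: inner_sum_left inner_sum_right inner_Basis if_distrib sum.delta power2_eq_square
        cong: if_cong)
  have inner: "p \<bullet> (\<Sum>b\<in>(Basis :: 'a set). f b *\<^sub>R b) = (\<Sum>b\<in>Basis. (p \<bullet> b) * f b)"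
    by (simp add: inner_sum_right mult.commute)
  show ?thesis
    unfolding gaussian_def norm_sq inner
    by (simp add: sum_negf[symmetric] sum_divide_distrib exp_sum sum_distrib_left prod.distrib)
qed

lemma
  fixes p :: "'a::euclidean_space"
  assumes "R > 0"
  shows integrable_gaussian_iexp:
      "integrable lborel (\<lambda>x. complex_of_real (gaussian R x) * iexp (p \<bullet> x))"
    and integral_gaussian_iexp:
      "(\<integral>x. complex_of_real (gaussian R x) * iexp (p \<bullet> x) \<partial>lborel)
        = complex_of_real ((sqrt (2*pi) * R) ^ DIM('a) * exp (- (norm p * R)\<^sup>2 / 2))"
proof -
  interpret product_sigma_finite "\<lambda>_. lborel" by standard
  let ?T = "\<lambda>f. \<Sum>b\<in>(Basis :: 'a set). f b *\<^sub>R b"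
  let ?g = "\<lambda>x. complex_of_real (gaussian R x) * iexp (p \<bullet> x)"
  let ?g1 = "\<lambda>b y. complex_of_real (exp (- y\<^sup>2 / (2 * R\<^sup>2))) * iexp ((p \<bullet> b) * y)"
  have T: "?T \<in> measurable (\<Pi>\<^sub>M b\<in>Basis. lborel) borel"
    by measurable
  have g: "?g \<in> borel_measurable borel"
    unfolding gaussian_def by measurable
  have "integrable (\<Pi>\<^sub>M b\<in>Basis. lborel) (\<lambda>f. \<Prod>b\<in>Basis. ?g1 b (f b))"
    by (rule product_integrable_prod) (simp, rule integrable_gaussian_iexp_1d[OF assms])
  then show "integrable lborel ?g"
    by (subst lborel_eq, subst integrable_distr_eq[OF T g]) (simp add: gaussian_iexp_Basis_expansion)
  have "(\<integral>x. ?g x \<partial>lborel) = (\<integral>f. (\<Prod>b\<in>Basis. ?g1 b (f b)) \<partial>(\<Pi>\<^sub>M b\<in>Basis. lborel))"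
    by (subst lborel_eq, subst integral_distr[OF T g]) (simp add: gaussian_iexp_Basis_expansion)
  also have "\<dots> = (\<Prod>b\<in>Basis. (\<integral>y. ?g1 b y \<partial>lborel))"
    by (intro product_integral_prod finite_Basis integrable_gaussian_iexp_1d[OF assms])
  also have "\<dots> = (\<Prod>b\<in>(Basis :: 'a set).
      complex_of_real (sqrt (2*pi) * R * exp (- ((p \<bullet> b) * R)\<^sup>2 / 2)))"
    by (simp only: integral_gaussian_iexp_1d[OF assms])
  also have "\<dots> = complex_of_real ((sqrt (2*pi) * R) ^ DIM('a) * exp (- (norm p * R)\<^sup>2 / 2))"
  proof -
    have "(norm p)\<^sup>2 = (\<Sum>b\<in>(Basis :: 'a set). (p \<bullet> b)\<^sup>2)"
      by (simp only: power2_norm_eq_inner) (subst euclidean_inner, simp add: power2_eq_square)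
    then have "(\<Sum>b\<in>(Basis :: 'a set). - ((p \<bullet> b) * R)\<^sup>2 / 2) = - (norm p * R)\<^sup>2 / 2"
      by (simp add: power_mult_distrib sum_divide_distrib[symmetric] sum_distrib_right[symmetric] sum_negf)
    then show ?thesis
      by (simp add: prod.distrib exp_sum[symmetric] power_mult_distrib flip: of_real_prod)
  qed
  finally show "(\<integral>x. ?g x \<partial>lborel)
      = complex_of_real ((sqrt (2*pi) * R) ^ DIM('a) * exp (- (norm p * R)\<^sup>2 / 2))" .
qed

lemma integral_gaussian_cos:
  fixes p :: "'a::euclidean_space"
  assumes "R > 0"
  shows "(\<integral>x. gaussian R x * cos (p \<bullet> x) \<partial>lborel)
    = (sqrt (2*pi) * R) ^ DIM('a) * exp (- (norm p * R)\<^sup>2 / 2)"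
proof -
  have "(\<integral>x. gaussian R x * cos (p \<bullet> x) \<partial>lborel)
      = Re (\<integral>x. complex_of_real (gaussian R x) * iexp (p \<bullet> x) \<partial>lborel)"
    by (subst integral_Re[OF integrable_gaussian_iexp[OF assms], symmetric]) (simp add: Re_exp)
  then show ?thesis
    by (simp add: integral_gaussian_iexp[OF assms])
qed

lemma integral_gaussian:
  "R > 0 \<Longrightarrow> (\<integral>x. gaussian R x \<partial>(lborel :: 'a::euclidean_space measure)) = (sqrt (2*pi) * R) ^ DIM('a)"
  using integral_gaussian_cos[of R "0 :: 'a"] by simp

lemma integrable_gaussian:
  assumes "R \<noteq> 0"
  shows "integrable lborel (gaussian R :: 'a::euclidean_space \<Rightarrow> real)"
  using assms integrable_Re[OF integrable_gaussian_iexp[of "\<bar>R\<bar>" 0]] by (simp add: gaussian_abs)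

section \<open>Gaussian means and their limits\<close>

(* For R = 0 the normalising factor vanishes and the mean is 0, so linearity needs no
   hypothesis on R. *)
definition gaussian_mean :: "real \<Rightarrow> ('a::euclidean_space \<Rightarrow> real) \<Rightarrow> real" where
  "gaussian_mean R h = (\<integral>x. h x * gaussian R x \<partial>lborel) / (sqrt (2*pi) * R) ^ DIM('a)"

definition bounded_measurable :: "('a::euclidean_space \<Rightarrow> real) \<Rightarrow> bool" where
  "bounded_measurable h \<longleftrightarrow> h \<in> borel_measurable lborel \<and> (\<exists>B. \<forall>x. \<bar>h x\<bar> \<le> B)"

lemma bounded_measurable_const: "bounded_measurable (\<lambda>x. c)"
  unfolding bounded_measurable_def by auto

lemma bounded_measurable_add:
  assumes "bounded_measurable f" "bounded_measurable g"
  shows "bounded_measurable (\<lambda>x. f x + g x)"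
proof -
  obtain B C where "\<And>x. \<bar>f x\<bar> \<le> B" "\<And>x. \<bar>g x\<bar> \<le> C"
    using assms unfolding bounded_measurable_def by blast
  then have "\<bar>f x + g x\<bar> \<le> B + C" for x
    by (meson abs_triangle_ineq add_mono order_trans)
  with assms show ?thesis
    unfolding bounded_measurable_def by auto
qed

lemma bounded_measurable_mult:
  assumes "bounded_measurable f" "bounded_measurable g"
  shows "bounded_measurable (\<lambda>x. f x * g x)"
proof -
  obtain B C where "\<And>x. \<bar>f x\<bar> \<le> B" "\<And>x. \<bar>g x\<bar> \<le> C"
    using assms unfolding bounded_measurable_def by blast
  then have "\<bar>f x * g x\<bar> \<le> B * C" for x
    unfolding abs_mult by (meson abs_ge_zero mult_mono order_trans)
  with assms show ?thesis
    unfolding bounded_measurable_def by auto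
qed

lemma bounded_measurable_diff:
  "bounded_measurable f \<Longrightarrow> bounded_measurable g \<Longrightarrow> bounded_measurable (\<lambda>x. f x - g x)"
  using bounded_measurable_add[OF _ bounded_measurable_mult[OF bounded_measurable_const, of g "-1"], of f]
  by simp

lemma bounded_measurable_sum:
  "(\<And>i. i \<in> I \<Longrightarrow> bounded_measurable (f i)) \<Longrightarrow> bounded_measurable (\<lambda>x. \<Sum>i\<in>I. f i x)"
proof (induction I rule: infinite_finite_induct)
  case (insert i I)
  then show ?case
    using bounded_measurable_add[of "f i" "\<lambda>x. \<Sum>i\<in>I. f i x"] by simp
qed (simp_all add: bounded_measurable_const)

lemma bounded_measurable_power:
  "bounded_measurable f \<Longrightarrow> bounded_measurable (\<lambda>x. f x ^ n)"
  by (induction n) (simp_all add: bounded_measurable_const bounded_measurable_mult)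

lemma bounded_measurable_cos_inner: "bounded_measurable (\<lambda>x. cos (p \<bullet> x))"
  unfolding bounded_measurable_def by (auto intro!: exI[of _ 1])

lemma bounded_measurable_sin_inner: "bounded_measurable (\<lambda>x. sin (p \<bullet> x))"
  unfolding bounded_measurable_def by (auto intro!: exI[of _ 1])

lemma bounded_measurable_exp:
  assumes "bounded_measurable h"
  shows "bounded_measurable (\<lambda>x. exp (h x))"
proof -
  obtain B where "\<And>x. \<bar>h x\<bar> \<le> B"
    using assms unfolding bounded_measurable_def by blast
  then have "\<bar>exp (h x)\<bar> \<le> exp B" for x
    by (simp add: abs_le_iff)
  with assms show ?thesis
    unfolding bounded_measurable_def by auto
qed

lemmas bounded_measurable_intros =
  bounded_measurable_const bounded_measurable_add bounded_measurable_diff bounded_measurable_mult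
  bounded_measurable_sum bounded_measurable_power bounded_measurable_exp
  bounded_measurable_cos_inner bounded_measurable_sin_inner

lemma integrable_bounded_measurable_gaussian:
  assumes "R \<noteq> 0" "h \<in> borel_measurable lborel" "\<And>x. \<bar>h x\<bar> \<le> B"
  shows "integrable lborel (\<lambda>x. h x * gaussian R x)"
proof (rule Bochner_Integration.integrable_bound)
  show "integrable lborel (\<lambda>x. B * gaussian R x)"
    using integrable_gaussian[OF assms(1)] by (rule integrable_mult_right)
  show "(\<lambda>x. h x * gaussian R x) \<in> borel_measurable lborel"
    using assms(2) unfolding gaussian_def by measurable
  show "AE x in lborel. norm (h x * gaussian R x) \<le> norm (B * gaussian R x)"
    using assms(3) gaussian_pos[of R]
    by (intro AE_I2) (simp add: abs_mult mult_right_mono order.trans[OF _ abs_ge_self])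
qed

lemma gaussian_mean_cmult: "gaussian_mean R (\<lambda>x. c * f x) = c * gaussian_mean R f"
  unfolding gaussian_mean_def by (simp add: mult.assoc)

lemma gaussian_mean_add:
  assumes "bounded_measurable f" "bounded_measurable g"
  shows "gaussian_mean R (\<lambda>x. f x + g x) = gaussian_mean R f + gaussian_mean R g"
proof (cases "R = 0")
  case False
  then have "integrable lborel (\<lambda>x. f x * gaussian R x)" "integrable lborel (\<lambda>x. g x * gaussian R x)"
    using assms integrable_bounded_measurable_gaussian
    unfolding bounded_measurable_def by blast+
  then show ?thesis
    by (simp add: gaussian_mean_def distrib_right add_divide_distrib)
qed (simp add: gaussian_mean_def power_0_left)

lemma gaussian_mean_diff:
  assumes "bounded_measurable f" "bounded_measurable g"
  shows "gaussian_mean R (\<lambda>x. f x - g x) = gaussian_mean R f - gaussian_mean R g"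
  using gaussian_mean_add[OF assms(1) bounded_measurable_mult[OF bounded_measurable_const assms(2)],
      of R "-1"]
  by (simp only: gaussian_mean_cmult) simp

lemma gaussian_mean_sum:
  "(\<And>i. i \<in> I \<Longrightarrow> bounded_measurable (f i)) \<Longrightarrow>
    gaussian_mean R (\<lambda>x. \<Sum>i\<in>I. f i x) = (\<Sum>i\<in>I. gaussian_mean R (f i))"
proof (induction I rule: infinite_finite_induct)
  case (insert i I)
  then show ?case
    using gaussian_mean_add[of "f i" "\<lambda>x. \<Sum>i\<in>I. f i x" R] bounded_measurable_sum[of I f]
    by simp
qed (simp_all add: gaussian_mean_def)

lemma gaussian_mean_cos:
  "R > 0 \<Longrightarrow> gaussian_mean R (\<lambda>x. cos (p \<bullet> x)) = exp (- (norm p * R)\<^sup>2 / 2)"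
  unfolding gaussian_mean_def by (simp add: integral_gaussian_cos mult.commute)

lemma gaussian_mean_const:
  assumes "R > 0"
  shows "gaussian_mean R (\<lambda>x::'a::euclidean_space. c) = c"
proof -
  have "gaussian_mean R (\<lambda>x::'a. 1) = 1"
    using gaussian_mean_cos[OF assms, of "0::'a"] by simp
  then show ?thesis
    using gaussian_mean_cmult[of R c "\<lambda>x::'a. 1"] by simp
qed

lemma gaussian_mean_abs_le:
  assumes "h \<in> borel_measurable lborel" "\<And>x. \<bar>h x\<bar> \<le> B"
  shows "\<bar>gaussian_mean R h\<bar> \<le> B"
proof (cases "R = 0")
  case True
  have "0 \<le> B" using assms(2) abs_ge_zero order_trans by blast
  with True show ?thesis by (simp add: gaussian_mean_def power_0_left)
next
  case False
  have "\<bar>\<integral>x. h x * gaussian R x \<partial>lborel\<bar> \<le> (\<integral>x. \<bar>h x * gaussian R x\<bar> \<partial>lborel)"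
    by (rule integral_abs_bound)
  also have "\<dots> \<le> (\<integral>x. B * gaussian R (x::'a) \<partial>lborel)"
  proof (rule Bochner_Integration.integral_mono)
    show "integrable lborel (\<lambda>x. \<bar>h x * gaussian R x\<bar>)"
      using integrable_bounded_measurable_gaussian[OF False assms] by simp
    show "integrable lborel (\<lambda>x::'a. B * gaussian R x)"
      using integrable_gaussian[OF False] by (rule integrable_mult_right)
    show "\<bar>h x * gaussian R x\<bar> \<le> B * gaussian R x" for x
      using assms(2)[of x] gaussian_pos[of R x] by (simp add: abs_mult mult_right_mono)
  qed
  also have "\<dots> = B * \<bar>sqrt (2*pi) * R\<bar> ^ DIM('a)"
    using False integral_gaussian[of "\<bar>R\<bar>", where 'a = 'a] by (simp add: gaussian_abs abs_mult)
  finally show ?thesis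
    using False by (simp add: gaussian_mean_def abs_div power_abs divide_le_eq)
qed

lemma gaussian_mean_mono:
  assumes "bounded_measurable f" "bounded_measurable g" "\<And>x. f x \<le> g x" "R > 0"
  shows "gaussian_mean R f \<le> gaussian_mean R g"
proof -
  have "0 \<le> (\<integral>x. (g x - f x) * gaussian R x \<partial>lborel)"
    using assms(3) gaussian_pos[of R] by (intro Bochner_Integration.integral_nonneg mult_nonneg_nonneg) (auto intro: less_imp_le)
  then have "0 \<le> gaussian_mean R (\<lambda>x. g x - f x)"
    using assms(4) by (simp add: gaussian_mean_def)
  then show ?thesis
    by (simp add: gaussian_mean_diff[OF assms(2,1)])
qed

lemma tendsto_gaussian_mean_cos:
  "((\<lambda>R. gaussian_mean R (\<lambda>x. cos (p \<bullet> x))) \<longlongrightarrow> indicator {0} p) at_top"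
proof -
  have "\<forall>\<^sub>F R in at_top. exp (- (norm p * R)\<^sup>2 / 2) = gaussian_mean R (\<lambda>x. cos (p \<bullet> x))"
    using eventually_gt_at_top[of 0] by eventually_elim (simp add: gaussian_mean_cos)
  moreover have "((\<lambda>R. exp (- (norm p * R)\<^sup>2 / 2)) \<longlongrightarrow> indicator {0} p) at_top"
  proof (cases "p = 0")
    case False
    then have "norm p > 0" by simp
    then have "((\<lambda>R. exp (- (norm p * R)\<^sup>2 / 2)) \<longlongrightarrow> 0) at_top"
      by real_asymp
    with False show ?thesis by simp
  qed simp
  ultimately show ?thesis
    by (rule Lim_transform_eventually[rotated])
qed

lemma tendsto_gaussian_mean_const: "((\<lambda>R. gaussian_mean R (\<lambda>x::'a::euclidean_space. c)) \<longlongrightarrow> c) at_top"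
proof (rule tendsto_eventually)
  show "\<forall>\<^sub>F R in at_top. gaussian_mean R (\<lambda>x::'a. c) = c"
    using eventually_gt_at_top[of 0] by eventually_elim (rule gaussian_mean_const)
qed

lemma tendsto_gaussian_mean_cmult:
  "((\<lambda>R. gaussian_mean R f) \<longlongrightarrow> L) at_top \<Longrightarrow>
    ((\<lambda>R. gaussian_mean R (\<lambda>x. c * f x)) \<longlongrightarrow> c * L) at_top"
  unfolding gaussian_mean_cmult by (rule tendsto_mult_left)

lemma tendsto_gaussian_mean_sum:
  assumes "\<And>i. i \<in> I \<Longrightarrow> bounded_measurable (f i)"
    and "\<And>i. i \<in> I \<Longrightarrow> ((\<lambda>R. gaussian_mean R (f i)) \<longlongrightarrow> L i) at_top"
  shows "((\<lambda>R. gaussian_mean R (\<lambda>x. \<Sum>i\<in>I. f i x)) \<longlongrightarrow> (\<Sum>i\<in>I. L i)) at_top"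
proof -
  have "((\<lambda>R. \<Sum>i\<in>I. gaussian_mean R (f i)) \<longlongrightarrow> (\<Sum>i\<in>I. L i)) at_top"
    by (rule tendsto_sum) (rule assms(2))
  with gaussian_mean_sum[of I f] assms(1) show ?thesis
    by simp
qed

lemma
  assumes "bounded_measurable f" "bounded_measurable g"
    and "((\<lambda>R. gaussian_mean R f) \<longlongrightarrow> a) at_top" "((\<lambda>R. gaussian_mean R g) \<longlongrightarrow> b) at_top"
  shows tendsto_gaussian_mean_add: "((\<lambda>R. gaussian_mean R (\<lambda>x. f x + g x)) \<longlongrightarrow> a + b) at_top"
    and tendsto_gaussian_mean_diff: "((\<lambda>R. gaussian_mean R (\<lambda>x. f x - g x)) \<longlongrightarrow> a - b) at_top"
  using tendsto_add[OF assms(3,4)] tendsto_diff[OF assms(3,4)]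
  by (simp_all add: gaussian_mean_add[OF assms(1,2)] gaussian_mean_diff[OF assms(1,2)])

lemma cos_cos_cos:
  "cos (a::real) * cos b * cos c = (cos (a + b + c) + cos (a + b - c) + cos (a - b + c) + cos (a - b - c)) / 4"
  by (simp add: cos_add cos_diff sin_add sin_diff algebra_simps)

lemma sin_sin_cos:
  "sin (a::real) * sin b * cos c = (cos (a - b + c) + cos (a - b - c) - cos (a + b + c) - cos (a + b - c)) / 4"
  by (simp add: cos_add cos_diff sin_add sin_diff algebra_simps)

lemma tendsto_gaussian_mean_cos_cos_cos:
  "((\<lambda>R. gaussian_mean R (\<lambda>x. cos (p \<bullet> x) * cos (q \<bullet> x) * cos (r \<bullet> x))) \<longlongrightarrow>
     (indicator {0} (p + q + r) + indicator {0} (p + q - r) + indicator {0} (p - q + r)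
       + indicator {0} (p - q - r)) / 4) at_top"
proof -
  have eq: "(\<lambda>x. cos (p \<bullet> x) * cos (q \<bullet> x) * cos (r \<bullet> x)) = (\<lambda>x. 1/4 *
      (cos ((p + q + r) \<bullet> x) + cos ((p + q - r) \<bullet> x) + cos ((p - q + r) \<bullet> x) + cos ((p - q - r) \<bullet> x)))"
    by (simp add: cos_cos_cos inner_add_left inner_diff_left)
  have "((\<lambda>R. gaussian_mean R (\<lambda>x. 1/4 *
      (cos ((p + q + r) \<bullet> x) + cos ((p + q - r) \<bullet> x) + cos ((p - q + r) \<bullet> x) + cos ((p - q - r) \<bullet> x))))
      \<longlongrightarrow> 1/4 * (indicator {0} (p + q + r) + indicator {0} (p + q - r) + indicator {0} (p - q + r)
       + indicator {0} (p - q - r))) at_top"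
    by (intro tendsto_gaussian_mean_cmult tendsto_gaussian_mean_add tendsto_gaussian_mean_cos
        bounded_measurable_add bounded_measurable_cos_inner)
  then show ?thesis
    unfolding eq by simp
qed

lemma tendsto_gaussian_mean_sin_sin_cos:
  "((\<lambda>R. gaussian_mean R (\<lambda>x. sin (p \<bullet> x) * sin (q \<bullet> x) * cos (r \<bullet> x))) \<longlongrightarrow>
     (indicator {0} (p - q + r) + indicator {0} (p - q - r) - indicator {0} (p + q + r)
       - indicator {0} (p + q - r)) / 4) at_top"
proof -
  have eq: "(\<lambda>x. sin (p \<bullet> x) * sin (q \<bullet> x) * cos (r \<bullet> x)) = (\<lambda>x. 1/4 *
      (cos ((p - q + r) \<bullet> x) + cos ((p - q - r) \<bullet> x) - cos ((p + q + r) \<bullet> x) - cos ((p + q - r) \<bullet> x)))"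
    by (simp add: sin_sin_cos inner_add_left inner_diff_left)
  have "((\<lambda>R. gaussian_mean R (\<lambda>x. 1/4 *
      (cos ((p - q + r) \<bullet> x) + cos ((p - q - r) \<bullet> x) - cos ((p + q + r) \<bullet> x) - cos ((p + q - r) \<bullet> x))))
      \<longlongrightarrow> 1/4 * (indicator {0} (p - q + r) + indicator {0} (p - q - r) - indicator {0} (p + q + r)
       - indicator {0} (p + q - r))) at_top"
    by (intro tendsto_gaussian_mean_cmult tendsto_gaussian_mean_add tendsto_gaussian_mean_diff
        tendsto_gaussian_mean_cos bounded_measurable_add bounded_measurable_diff
        bounded_measurable_cos_inner)
  then show ?thesis
    unfolding eq by simp
qed

lemma tendsto_gaussian_mean_cos_cos:
  "((\<lambda>R. gaussian_mean R (\<lambda>x. cos (p \<bullet> x) * cos (q \<bullet> x))) \<longlongrightarrow>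
     (indicator {0} (p + q) + indicator {0} (p - q)) / 2) at_top"
proof -
  have "(2 * indicator {0} (p - q) + 2 * indicator {0} (p + q)) / 4
      = (indicator {0} (p + q) + indicator {0} (p - q)) / (2::real)"
    by (simp add: field_simps)
  with tendsto_gaussian_mean_cos_cos_cos[of p q 0] show ?thesis
    by simp
qed

lemma tendsto_gaussian_mean_sin_sin:
  "((\<lambda>R. gaussian_mean R (\<lambda>x. sin (p \<bullet> x) * sin (q \<bullet> x))) \<longlongrightarrow>
     (indicator {0} (p - q) - indicator {0} (p + q)) / 2) at_top"
proof -
  have "(2 * indicator {0} (p - q) - 2 * indicator {0} (p + q)) / 4
      = (indicator {0} (p - q) - indicator {0} (p + q)) / (2::real)"
    by (simp add: field_simps)
  with tendsto_gaussian_mean_sin_sin_cos[of p q 0] show ?thesis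
    by simp
qed

lemma tendsto_gaussian_mean_cos_sum:
  "((\<lambda>R. gaussian_mean R (\<lambda>x. \<Sum>i\<in>I. w i * cos (p i \<bullet> x))) \<longlongrightarrow>
     (\<Sum>i\<in>I. w i * indicator {0} (p i))) at_top"
  by (intro tendsto_gaussian_mean_sum tendsto_gaussian_mean_cmult tendsto_gaussian_mean_cos
      bounded_measurable_intros)

lemma tendsto_gaussian_mean_cos_cos_sum:
  "((\<lambda>R. gaussian_mean R (\<lambda>x. \<Sum>i\<in>I. \<Sum>j\<in>J. w i j * (cos (p i \<bullet> x) * cos (q j \<bullet> x)))) \<longlongrightarrow>
     (\<Sum>i\<in>I. \<Sum>j\<in>J. w i j * ((indicator {0} (p i + q j) + indicator {0} (p i - q j)) / 2))) at_top"
  by (intro tendsto_gaussian_mean_sum tendsto_gaussian_mean_cmult tendsto_gaussian_mean_cos_cos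
      bounded_measurable_intros)

lemma tendsto_gaussian_mean_sin_sin_sum:
  "((\<lambda>R. gaussian_mean R (\<lambda>x. \<Sum>i\<in>I. \<Sum>j\<in>J. w i j * (sin (p i \<bullet> x) * sin (q j \<bullet> x)))) \<longlongrightarrow>
     (\<Sum>i\<in>I. \<Sum>j\<in>J. w i j * ((indicator {0} (p i - q j) - indicator {0} (p i + q j)) / 2))) at_top"
  by (intro tendsto_gaussian_mean_sum tendsto_gaussian_mean_cmult tendsto_gaussian_mean_sin_sin
      bounded_measurable_intros)

lemma tendsto_gaussian_mean_cos_cos_cos_sum:
  "((\<lambda>R. gaussian_mean R (\<lambda>x. \<Sum>i\<in>I. \<Sum>j\<in>J. \<Sum>l\<in>L.
       w i j l * (cos (p i \<bullet> x) * cos (q j \<bullet> x) * cos (r l \<bullet> x)))) \<longlongrightarrow>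
     (\<Sum>i\<in>I. \<Sum>j\<in>J. \<Sum>l\<in>L. w i j l * ((indicator {0} (p i + q j + r l) + indicator {0} (p i + q j - r l)
        + indicator {0} (p i - q j + r l) + indicator {0} (p i - q j - r l)) / 4))) at_top"
  by (intro tendsto_gaussian_mean_sum tendsto_gaussian_mean_cmult tendsto_gaussian_mean_cos_cos_cos
      bounded_measurable_intros)

lemma tendsto_gaussian_mean_sin_sin_cos_sum:
  "((\<lambda>R. gaussian_mean R (\<lambda>x. \<Sum>i\<in>I. \<Sum>j\<in>J. \<Sum>l\<in>L.
       w i j l * (sin (p i \<bullet> x) * sin (q j \<bullet> x) * cos (r l \<bullet> x)))) \<longlongrightarrow>
     (\<Sum>i\<in>I. \<Sum>j\<in>J. \<Sum>l\<in>L. w i j l * ((indicator {0} (p i - q j + r l) + indicator {0} (p i - q j - r l)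
        - indicator {0} (p i + q j + r l) - indicator {0} (p i + q j - r l)) / 4))) at_top"
  by (intro tendsto_gaussian_mean_sum tendsto_gaussian_mean_cmult tendsto_gaussian_mean_sin_sin_cos
      bounded_measurable_intros)

lemma abs_exp_minus_taylor_le:
  fixes u :: real
  assumes "\<bar>u\<bar> \<le> c" "c \<le> 1"
  shows "\<bar>exp u - (\<Sum>k\<le>n. u ^ k / fact k)\<bar> \<le> 3 * c ^ Suc n / fact n"
proof -
  have "exp \<bar>u\<bar> \<le> 3"
    using assms exp_le order_trans[of "exp \<bar>u\<bar>" "exp 1"] by auto
  moreover have "\<bar>u\<bar> ^ Suc n \<le> c ^ Suc n"
    using assms(1) by (intro power_mono) auto
  ultimately have "exp \<bar>u\<bar> * \<bar>u\<bar> ^ Suc n / fact n \<le> 3 * c ^ Suc n / fact n"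
    by (intro divide_right_mono mult_mono) auto
  with Taylor_exp_field[of u n] show ?thesis
    by simp
qed

lemma eventually_gaussian_mean_exp_taylor:
  fixes G \<phi> :: "'a::euclidean_space \<Rightarrow> real"
  assumes G: "bounded_measurable G" "\<And>x. \<bar>G x\<bar> \<le> B"
    and \<phi>: "bounded_measurable \<phi>" "\<And>x. \<bar>\<phi> x\<bar> \<le> K" and small: "\<bar>\<epsilon>\<bar> * K \<le> 1"
    and moments: "\<And>k. k \<le> n \<Longrightarrow> ((\<lambda>R. gaussian_mean R (\<lambda>x. G x * \<phi> x ^ k)) \<longlongrightarrow> m k) at_top"
    and "\<delta> > 0"
  shows "\<forall>\<^sub>F R in at_top. \<bar>gaussian_mean R (\<lambda>x. G x * exp (\<epsilon> * \<phi> x)) - (\<Sum>k\<le>n. \<epsilon> ^ k / fact k * m k)\<bar>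
           \<le> 3 * B * (\<bar>\<epsilon>\<bar> * K) ^ Suc n / fact n + \<delta>"
proof -
  define T where "T x = (\<Sum>k\<le>n. \<epsilon> ^ k / fact k * (G x * \<phi> x ^ k))" for x
  have bm_T: "bounded_measurable T" and bm_exp: "bounded_measurable (\<lambda>x. G x * exp (\<epsilon> * \<phi> x))"
    unfolding T_def by (intro bounded_measurable_intros G(1) \<phi>(1))+
  have remainder: "\<bar>G x * exp (\<epsilon> * \<phi> x) - T x\<bar> \<le> 3 * B * (\<bar>\<epsilon>\<bar> * K) ^ Suc n / fact n" for x
  proof -
    have "\<bar>\<epsilon> * \<phi> x\<bar> \<le> \<bar>\<epsilon>\<bar> * K"
      unfolding abs_mult using \<phi>(2) by (intro mult_left_mono) auto
    from abs_exp_minus_taylor_le[OF this small]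
    have "\<bar>G x\<bar> * \<bar>exp (\<epsilon> * \<phi> x) - (\<Sum>k\<le>n. (\<epsilon> * \<phi> x) ^ k / fact k)\<bar>
        \<le> B * (3 * (\<bar>\<epsilon>\<bar> * K) ^ Suc n / fact n)"
      using G(2)[of x] order_trans[OF abs_ge_zero G(2)] by (intro mult_mono) auto
    moreover have "T x = G x * (\<Sum>k\<le>n. (\<epsilon> * \<phi> x) ^ k / fact k)"
      by (simp add: T_def sum_distrib_left power_mult_distrib field_simps)
    ultimately show ?thesis
      by (simp add: abs_mult mult_ac flip: right_diff_distrib)
  qed
  have "((\<lambda>R. gaussian_mean R T) \<longlongrightarrow> (\<Sum>k\<le>n. \<epsilon> ^ k / fact k * m k)) at_top"
    unfolding T_def
    by (intro tendsto_gaussian_mean_sum tendsto_gaussian_mean_cmult moments bounded_measurable_intros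
        G(1) \<phi>(1)) auto
  then have "\<forall>\<^sub>F R in at_top. \<bar>gaussian_mean R T - (\<Sum>k\<le>n. \<epsilon> ^ k / fact k * m k)\<bar> < \<delta>"
    using \<open>\<delta> > 0\<close> by (auto simp: tendsto_iff dist_real_def)
  then show ?thesis
  proof eventually_elim
    case (elim R)
    have "\<bar>gaussian_mean R (\<lambda>x. G x * exp (\<epsilon> * \<phi> x)) - gaussian_mean R T\<bar>
        \<le> 3 * B * (\<bar>\<epsilon>\<bar> * K) ^ Suc n / fact n"
      unfolding gaussian_mean_diff[OF bm_exp bm_T, symmetric]
      using bm_exp bm_T remainder
      by (intro gaussian_mean_abs_le) (auto simp: bounded_measurable_def)
    with elim show ?case
      by linarith
  qed
qed

lemma pd_has_derivative:
  assumes "(g has_derivative g') (at x)"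
  shows "pd i g x = g' (axis i 1)"
proof -
  have "((\<lambda>t. x + t *\<^sub>R axis i 1) has_derivative (\<lambda>t. t *\<^sub>R axis i 1)) (at 0)"
    by (auto intro!: derivative_eq_intros)
  with assms have "((\<lambda>t. g (x + t *\<^sub>R axis i 1)) has_derivative (\<lambda>t. g' (t *\<^sub>R axis i 1))) (at 0)"
    using diff_chain_at[of "\<lambda>t. x + t *\<^sub>R axis i 1" _ 0 g g'] by (simp add: o_def)
  moreover have "(\<lambda>t. g' (t *\<^sub>R axis i 1)) = (*) (g' (axis i 1))"
    using has_derivative_linear[OF assms] by (auto simp: linear_scale mult.commute)
  ultimately have "((\<lambda>t. g (x + t *\<^sub>R axis i 1)) has_field_derivative g' (axis i 1)) (at 0)"
    by (simp add: has_field_derivative_def)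
  then show ?thesis
    unfolding pd_def by (rule DERIV_imp_deriv)
qed

(* ln F, its Hessian and the derivatives of the Hessian all lie in this family. *)
definition trig_quadratic ::
  "'m set \<Rightarrow> ('m \<Rightarrow> real^'n) \<Rightarrow> ('m \<Rightarrow> real) \<Rightarrow> ('m \<Rightarrow> real) \<Rightarrow> real \<Rightarrow> real^'n \<Rightarrow> real \<Rightarrow> real^'n \<Rightarrow> real"
  where "trig_quadratic M k a b q l c y =
    (\<Sum>m\<in>M. a m * cos (k m \<bullet> y) + b m * sin (k m \<bullet> y)) + q * (y \<bullet> y) + l \<bullet> y + c"

lemma pd_trig_quadratic:
  "pd j (trig_quadratic M k a b q l c) =
     trig_quadratic M k (\<lambda>m. b m * k m $ j) (\<lambda>m. - a m * k m $ j) 0 ((2 * q) *\<^sub>R axis j 1) (l $ j)"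
proof
  fix y
  have "(trig_quadratic M k a b q l c has_derivative (\<lambda>v.
      (\<Sum>m\<in>M. a m * - ((k m \<bullet> v) * sin (k m \<bullet> y)) + b m * ((k m \<bullet> v) * cos (k m \<bullet> y)))
        + q * (y \<bullet> v + v \<bullet> y) + l \<bullet> v)) (at y)"
    unfolding trig_quadratic_def[abs_def] by (auto intro!: derivative_eq_intros)
  then show "pd j (trig_quadratic M k a b q l c) y =
      trig_quadratic M k (\<lambda>m. b m * k m $ j) (\<lambda>m. - a m * k m $ j) 0 ((2 * q) *\<^sub>R axis j 1) (l $ j) y"
    by (simp add: pd_has_derivative trig_quadratic_def inner_axis inner_commute algebra_simps)
qed

section \<open>Estimates for the numerator of I D - Q^2\<close>

lemma abs_mult_le: "\<bar>x\<bar> \<le> a \<Longrightarrow> \<bar>y\<bar> \<le> b \<Longrightarrow> \<bar>x * y\<bar> \<le> a * (b::real)"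
  unfolding abs_mult by (rule mult_mono) (auto intro: order_trans[OF abs_ge_zero])

lemma abs_sum_le_card_mult:
  assumes "\<And>i. i \<in> I \<Longrightarrow> \<bar>f i\<bar> \<le> B"
  shows "\<bar>sum f I\<bar> \<le> real (card I) * B"
proof -
  have "(\<Sum>i\<in>I. \<bar>f i\<bar>) \<le> real (card I) * B"
    using assms by (rule sum_bounded_above)
  then show ?thesis
    by (rule order_trans[OF sum_abs])
qed

lemma centred_product_minus_square_le:
  fixes \<epsilon> a b v :: real
  assumes \<epsilon>: "0 < \<epsilon>" "\<epsilon> \<le> 1/100000"
    and a: "\<bar>a - (3/2 + 3*\<epsilon>/4)\<bar> \<le> 250 * \<epsilon>\<^sup>2"
    and b: "\<bar>b - (3/2 - 3*\<epsilon>/16)\<bar> \<le> 750 * \<epsilon>\<^sup>2"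
    and v: "\<bar>v - (3/2 + 3*\<epsilon>/8)\<bar> \<le> 250 * \<epsilon>\<^sup>2"
  shows "a * b - v\<^sup>2 \<le> - \<epsilon> / 4"
proof -
  define a0 b0 v0 where "a0 = 3/2 + 3*\<epsilon>/4" and "b0 = 3/2 - 3*\<epsilon>/16" and "v0 = 3/2 + 3*\<epsilon>/8"
  have \<epsilon>\<^sub>2: "\<epsilon>\<^sup>2 \<le> \<epsilon> / 100000"
    using \<epsilon> by (simp add: power2_eq_square mult_left_mono)
  have "\<bar>a0\<bar> \<le> 2" "\<bar>b\<bar> \<le> 2" "\<bar>v + v0\<bar> \<le> 4"
    using \<epsilon> \<epsilon>\<^sub>2 b v unfolding a0_def b0_def v0_def by linarith+
  then have "\<bar>a0 * (b - b0)\<bar> \<le> 2 * (750 * \<epsilon>\<^sup>2)" "\<bar>b * (a - a0)\<bar> \<le> 2 * (250 * \<epsilon>\<^sup>2)"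
      "\<bar>(v - v0) * (v + v0)\<bar> \<le> (250 * \<epsilon>\<^sup>2) * 4"
    using a b v unfolding a0_def[symmetric] b0_def[symmetric] v0_def[symmetric]
    by (blast intro: abs_mult_le)+
  moreover have "a * b - v\<^sup>2 = (a0 * b0 - v0\<^sup>2) + a0 * (b - b0) + b * (a - a0) - (v - v0) * (v + v0)"
    by (simp add: algebra_simps power2_eq_square)
  moreover have "a0 * b0 - v0\<^sup>2 = - 9 * \<epsilon> / 32 - 9 * \<epsilon>\<^sup>2 / 32"
    unfolding a0_def b0_def v0_def by (simp add: power2_eq_square algebra_simps)
  ultimately show ?thesis
    using \<epsilon> \<epsilon>\<^sub>2 by (simp add: abs_le_iff)
qed

lemma moment_combination_perturbation:
  fixes e r X Y V W Z :: real
  assumes e: "\<bar>e\<bar> \<le> 1" and r: "\<bar>r\<bar> \<le> 1"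
    and bounds: "\<bar>X\<bar> \<le> 2" "\<bar>Y\<bar> \<le> 2" "\<bar>V\<bar> \<le> 2" "\<bar>W\<bar> \<le> 2" "\<bar>Z\<bar> \<le> 2"
  shows "\<bar>(e*X + 2*r*Z) * (e\<^sup>2*Y + 2*e^3*W + 6*e\<^sup>2*r*V + 6*e*r\<^sup>2*X + 4*r^3*Z)
           - (e\<^sup>2*V + 2*e*r*X + 2*r\<^sup>2*Z)\<^sup>2 - (e*X * (e\<^sup>2*Y + 2*e^3*W) - e^4*V\<^sup>2)\<bar> \<le> 312 * \<bar>r\<bar>"
proof -
  define D1 where "D1 = 6*e\<^sup>2*V + 6*e*r*X + 4*r\<^sup>2*Z"
  define D where "D = e\<^sup>2*Y + 2*e^3*W + r * D1"
  define Q1 where "Q1 = 2*e*X + 2*r*Z"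
  have powers: "\<bar>e\<^sup>2\<bar> \<le> 1" "\<bar>e^3\<bar> \<le> 1" "\<bar>r\<^sup>2\<bar> \<le> 1"
    using e r by (simp_all add: power_abs power_le_one abs_square_le_1)
  have numerals: "\<bar>2\<bar> \<le> (2::real)" "\<bar>4\<bar> \<le> (4::real)" "\<bar>6\<bar> \<le> (6::real)"
    by simp_all
  have "\<bar>6*e\<^sup>2*V\<bar> \<le> 6 * 1 * 2" "\<bar>6*e*r*X\<bar> \<le> 6 * 1 * 1 * 2" "\<bar>4*r\<^sup>2*Z\<bar> \<le> 4 * 1 * 2"
    "\<bar>e\<^sup>2*Y\<bar> \<le> 1 * 2" "\<bar>2*e^3*W\<bar> \<le> 2 * 1 * 2" "\<bar>2*e*X\<bar> \<le> 2 * 1 * 2" "\<bar>2*r*Z\<bar> \<le> 2 * 1 * 2"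
    using e r powers bounds numerals by (blast intro: abs_mult_le)+
  then have D1: "\<bar>D1\<bar> \<le> 32" and D: "\<bar>D\<bar> \<le> 38" and Q1: "\<bar>Q1\<bar> \<le> 8"
    using abs_mult_le[OF r, of D1 32] unfolding D1_def D_def Q1_def by linarith+
  have "\<bar>e*X*D1\<bar> \<le> 1 * 2 * 32" "\<bar>2*Z*D\<bar> \<le> 2 * 2 * 38" "\<bar>2*e\<^sup>2*V*Q1\<bar> \<le> 2 * 1 * 2 * 8"
    "\<bar>r*Q1\<^sup>2\<bar> \<le> 1 * (8 * 8)"
    using e r powers bounds numerals D1 D Q1 unfolding power2_eq_square[of Q1]
    by (blast intro: abs_mult_le)+
  then have "\<bar>e*X*D1 + 2*Z*D - 2*e\<^sup>2*V*Q1 - r*Q1\<^sup>2\<bar> \<le> 312"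
    by linarith
  moreover have "(e*X + 2*r*Z) * (e\<^sup>2*Y + 2*e^3*W + 6*e\<^sup>2*r*V + 6*e*r\<^sup>2*X + 4*r^3*Z)
      - (e\<^sup>2*V + 2*e*r*X + 2*r\<^sup>2*Z)\<^sup>2 - (e*X * (e\<^sup>2*Y + 2*e^3*W) - e^4*V\<^sup>2)
      = r * (e*X*D1 + 2*Z*D - 2*e\<^sup>2*V*Q1 - r*Q1\<^sup>2)"
    unfolding D1_def D_def Q1_def by (simp add: algebra_simps power2_eq_square power3_eq_cube power4_eq_xxxx)
  ultimately show ?thesis
    by (simp add: abs_mult mult_left_mono mult.commute)
qed

lemma leading_moment_combination_le:
  fixes \<epsilon> X Y V W :: real
  assumes \<epsilon>: "0 < \<epsilon>" "\<epsilon> \<le> 1/100000"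
    and X: "\<bar>X - \<epsilon> * (3/2 + 3*\<epsilon>/4)\<bar> \<le> 250 * \<epsilon> ^ 3"
    and Y: "\<bar>Y - (3/2 + 3*\<epsilon>/16)\<bar> \<le> 250 * \<epsilon>\<^sup>2"
    and V: "\<bar>V - (3/2 + 3*\<epsilon>/8)\<bar> \<le> 250 * \<epsilon>\<^sup>2"
    and W: "\<bar>W + 3/16\<bar> \<le> 250 * \<epsilon>"
  shows "\<epsilon>*X * (\<epsilon>\<^sup>2*Y + 2*\<epsilon>^3*W) - \<epsilon>^4*V\<^sup>2 \<le> \<epsilon>^4 * (- \<epsilon> / 4)"
proof -
  define a where "a = X / \<epsilon>"
  have Xa: "X = \<epsilon> * a"
    using \<epsilon> by (simp add: a_def)
  have "\<epsilon> * \<bar>a - (3/2 + 3*\<epsilon>/4)\<bar> \<le> \<epsilon> * (250 * \<epsilon>\<^sup>2)"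
    using X \<epsilon> by (simp add: Xa abs_mult power2_eq_square power3_eq_cube flip: right_diff_distrib)
  then have a: "\<bar>a - (3/2 + 3*\<epsilon>/4)\<bar> \<le> 250 * \<epsilon>\<^sup>2"
    using \<epsilon> by simp
  have "\<bar>2 * \<epsilon> * (W + 3/16)\<bar> \<le> 2 * \<epsilon> * (250 * \<epsilon>)"
    using W \<epsilon> by (simp add: abs_mult)
  then have b: "\<bar>(Y + 2*\<epsilon>*W) - (3/2 - 3*\<epsilon>/16)\<bar> \<le> 750 * \<epsilon>\<^sup>2"
    using Y by (simp add: abs_le_iff power2_eq_square algebra_simps)
  have "\<epsilon>*X * (\<epsilon>\<^sup>2*Y + 2*\<epsilon>^3*W) - \<epsilon>^4*V\<^sup>2 = \<epsilon>^4 * (a * (Y + 2*\<epsilon>*W) - V\<^sup>2)"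
    by (simp add: Xa algebra_simps power2_eq_square power3_eq_cube power4_eq_xxxx)
  also have "\<dots> \<le> \<epsilon>^4 * (- \<epsilon> / 4)"
    using centred_product_minus_square_le[OF \<epsilon> a b V] \<epsilon> by (intro mult_left_mono) auto
  finally show ?thesis .
qed

(* X, Y, V, W, Z stand for the weighted means of phi_hex, hex_grad_sq, hex_trace_sq,
   hex_trace_cube and 1; the centres are their Taylor polynomials in eps as R -> infinity. *)
lemma moment_combination_neg:
  fixes \<epsilon> \<rho> X Y V W Z :: real
  assumes \<epsilon>: "0 < \<epsilon>" "\<epsilon> \<le> 1/100000" and \<rho>: "0 < \<rho>" "\<rho> \<le> \<epsilon> ^ 6"
    and X: "\<bar>X - \<epsilon> * (3/2 + 3*\<epsilon>/4)\<bar> \<le> 250 * \<epsilon> ^ 3"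
    and Y: "\<bar>Y - (3/2 + 3*\<epsilon>/16)\<bar> \<le> 250 * \<epsilon>\<^sup>2"
    and V: "\<bar>V - (3/2 + 3*\<epsilon>/8)\<bar> \<le> 250 * \<epsilon>\<^sup>2"
    and W: "\<bar>W + 3/16\<bar> \<le> 250 * \<epsilon>"
    and Z: "\<bar>Z - 1\<bar> \<le> 250 * \<epsilon>"
  shows "(\<epsilon>*X + 2*\<rho>*Z) * (\<epsilon>\<^sup>2*Y + 2*\<epsilon>^3*W + 6*\<epsilon>\<^sup>2*\<rho>*V + 6*\<epsilon>*\<rho>\<^sup>2*X + 4*\<rho>^3*Z)
           - (\<epsilon>\<^sup>2*V + 2*\<epsilon>*\<rho>*X + 2*\<rho>\<^sup>2*Z)\<^sup>2 < 0"
proof -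
  have \<epsilon>_sq: "\<epsilon>\<^sup>2 \<le> \<epsilon> / 100000"
    using \<epsilon> by (simp add: power2_eq_square mult_left_mono)
  have \<epsilon>_cube: "\<epsilon> ^ 3 \<le> \<epsilon>\<^sup>2"
    using \<epsilon> by (intro power_decreasing) auto
  have "0 \<le> \<epsilon> * (3/2 + 3*\<epsilon>/4)"
    using \<epsilon> by simp
  moreover have "\<epsilon> * (3/2 + 3*\<epsilon>/4) \<le> 1/4 * 2"
    using \<epsilon> by (intro mult_mono) auto
  ultimately have "\<bar>X\<bar> \<le> 2" "\<bar>Y\<bar> \<le> 2" "\<bar>V\<bar> \<le> 2" "\<bar>W\<bar> \<le> 2" "\<bar>Z\<bar> \<le> 2" "\<bar>\<epsilon>\<bar> \<le> 1" "\<bar>\<rho>\<bar> \<le> 1"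
    using X Y V W Z \<epsilon> \<epsilon>_sq \<epsilon>_cube \<rho> power_le_one[of \<epsilon> 6] by linarith+
  then have "\<bar>(\<epsilon>*X + 2*\<rho>*Z) * (\<epsilon>\<^sup>2*Y + 2*\<epsilon>^3*W + 6*\<epsilon>\<^sup>2*\<rho>*V + 6*\<epsilon>*\<rho>\<^sup>2*X + 4*\<rho>^3*Z)
      - (\<epsilon>\<^sup>2*V + 2*\<epsilon>*\<rho>*X + 2*\<rho>\<^sup>2*Z)\<^sup>2 - (\<epsilon>*X * (\<epsilon>\<^sup>2*Y + 2*\<epsilon>^3*W) - \<epsilon>^4*V\<^sup>2)\<bar> \<le> 312 * \<epsilon> ^ 6"
    using moment_combination_perturbation[of \<epsilon> \<rho> X Y V W Z] \<rho> by simp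
  moreover have "\<epsilon>*X * (\<epsilon>\<^sup>2*Y + 2*\<epsilon>^3*W) - \<epsilon>^4*V\<^sup>2 \<le> \<epsilon>^4 * (- \<epsilon> / 4)"
    using leading_moment_combination_le[OF \<epsilon> X Y V W] .
  moreover have "312 * \<epsilon> ^ 6 = \<epsilon>^4 * \<epsilon> * (312 * \<epsilon>)"
    by (simp add: eval_nat_numeral)
  moreover have "\<epsilon>^4 * \<epsilon> * (312 * \<epsilon>) < \<epsilon>^4 * \<epsilon> * (1/4)"
    using \<epsilon> by (intro mult_strict_left_mono) auto
  ultimately show ?thesis
    by (simp add: abs_le_iff)
qed

section \<open>The hexagonal potential\<close>

definition kvec :: "nat \<Rightarrow> real^2" where
  "kvec m = (if m = 0 then kvec1 else if m = 1 then kvec2 else kvec3)"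

lemma kvec_simps [simp]: "kvec 0 = kvec1" "kvec (Suc 0) = kvec2" "kvec 2 = kvec3"
  by (simp_all add: kvec_def)

lemma kvec_components [simp]:
  "kvec1 $ 1 = 1" "kvec1 $ 2 = 0" "kvec2 $ 1 = -1/2" "kvec2 $ 2 = sqrt 3 / 2"
  "kvec3 $ 1 = -1/2" "kvec3 $ 2 = - sqrt 3 / 2"
  by (simp_all add: kvec1_def kvec2_def kvec3_def)

lemma inner_vec2: "(x::real^2) \<bullet> y = x $ 1 * y $ 1 + x $ 2 * y $ 2"
  by (simp add: inner_vec_def sum_2)

lemma inner_kvecs [simp]:
  "kvec1 \<bullet> kvec1 = 1" "kvec2 \<bullet> kvec2 = 1" "kvec3 \<bullet> kvec3 = 1"
  "kvec1 \<bullet> kvec2 = -1/2" "kvec2 \<bullet> kvec1 = -1/2" "kvec1 \<bullet> kvec3 = -1/2"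
  "kvec3 \<bullet> kvec1 = -1/2" "kvec2 \<bullet> kvec3 = -1/2" "kvec3 \<bullet> kvec2 = -1/2"
  by (simp_all add: inner_vec2 power2_eq_square[symmetric] power_divide)

lemma abs_inner_kvec_le: "\<bar>kvec m \<bullet> kvec n\<bar> \<le> 1"
  by (simp add: kvec_def)

lemma indicator_zero_vec2: "indicator {0} (v::real^2) = (if v $ 1 = 0 \<and> v $ 2 = 0 then 1 else 0)"
  by (simp add: vec_eq_iff forall_2)

lemma sum_lessThan_3: "(\<Sum>i<(3::nat). f i) = f 0 + f 1 + (f 2 :: 'a::comm_monoid_add)"
  by (simp add: numeral_3_eq_3 numeral_2_eq_2 lessThan_Suc add_ac)

lemmas hex_eval_simps = sum_lessThan_3 indicator_zero_vec2 power2_eq_square power3_eq_cube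

lemma phi_hex_eq_sum: "phi_hex x = (\<Sum>m<3. cos (kvec m \<bullet> x))"
  by (simp add: phi_hex_def sum_lessThan_3)

lemma abs_phi_hex_le: "\<bar>phi_hex x\<bar> \<le> 3"
  using abs_cos_le_one[of "kvec1 \<bullet> x"] abs_cos_le_one[of "kvec2 \<bullet> x"] abs_cos_le_one[of "kvec3 \<bullet> x"]
  unfolding phi_hex_def by linarith

lemma bounded_measurable_phi_hex: "bounded_measurable phi_hex"
  unfolding phi_hex_eq_sum[abs_def] by (intro bounded_measurable_intros)

(* For A = -Hess phi_hex = (SUM m. k_m k_m^T cos (k_m . x)) these are tr A^2, |grad A|^2 and
   tr A^3, expanded through the Gram entries k_m . k_n. *)
definition hex_trace_sq :: "real^2 \<Rightarrow> real" where
  "hex_trace_sq x = (\<Sum>m<3. \<Sum>n<3. (kvec m \<bullet> kvec n)\<^sup>2 * (cos (kvec m \<bullet> x) * cos (kvec n \<bullet> x)))"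

definition hex_grad_sq :: "real^2 \<Rightarrow> real" where
  "hex_grad_sq x = (\<Sum>m<3. \<Sum>n<3. (kvec m \<bullet> kvec n) ^ 3 * (sin (kvec m \<bullet> x) * sin (kvec n \<bullet> x)))"

definition hex_trace_cube :: "real^2 \<Rightarrow> real" where
  "hex_trace_cube x = (\<Sum>m<3. \<Sum>n<3. \<Sum>l<3. (kvec m \<bullet> kvec n) * (kvec n \<bullet> kvec l) * (kvec l \<bullet> kvec m)
     * (cos (kvec m \<bullet> x) * cos (kvec n \<bullet> x) * cos (kvec l \<bullet> x)))"

lemma
  shows abs_hex_trace_sq_le: "\<bar>hex_trace_sq x\<bar> \<le> 9"
    and abs_hex_grad_sq_le: "\<bar>hex_grad_sq x\<bar> \<le> 9"
    and abs_hex_trace_cube_le: "\<bar>hex_trace_cube x\<bar> \<le> 27"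
proof -
  have le_1: "\<bar>u * v\<bar> \<le> 1" if "\<bar>u\<bar> \<le> 1" "\<bar>v\<bar> \<le> 1" for u v :: real
    using abs_mult_le[OF that] by simp
  have sum_le: "\<bar>\<Sum>i<3. f i\<bar> \<le> 3 * B" if "\<And>i. \<bar>f i\<bar> \<le> B" for f :: "nat \<Rightarrow> real" and B
    using abs_sum_le_card_mult[of "{..<3}" f B] that by simp
  have "\<bar>hex_trace_sq x\<bar> \<le> 3 * (3 * 1)" "\<bar>hex_grad_sq x\<bar> \<le> 3 * (3 * 1)"
    "\<bar>hex_trace_cube x\<bar> \<le> 3 * (3 * (3 * 1))"
    unfolding hex_trace_sq_def hex_grad_sq_def hex_trace_cube_def
    by (intro sum_le le_1; simp add: abs_inner_kvec_le power_abs power_le_one abs_square_le_1)+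
  then show "\<bar>hex_trace_sq x\<bar> \<le> 9" "\<bar>hex_grad_sq x\<bar> \<le> 9" "\<bar>hex_trace_cube x\<bar> \<le> 27"
    by simp_all
qed

lemma bounded_measurable_hex_polys:
  "bounded_measurable hex_trace_sq" "bounded_measurable hex_grad_sq" "bounded_measurable hex_trace_cube"
  unfolding hex_trace_sq_def[abs_def] hex_grad_sq_def[abs_def] hex_trace_cube_def[abs_def]
  by (intro bounded_measurable_intros)+

lemma phi_hex_moment_expansions:
  "phi_hex x * phi_hex x ^ 0 = (\<Sum>m<3. 1 * cos (kvec m \<bullet> x))"
  "phi_hex x * phi_hex x ^ 1 = (\<Sum>m<3. \<Sum>n<3. 1 * (cos (kvec m \<bullet> x) * cos (kvec n \<bullet> x)))"
  "phi_hex x * phi_hex x ^ 2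
     = (\<Sum>m<3. \<Sum>n<3. \<Sum>l<3. 1 * (cos (kvec m \<bullet> x) * cos (kvec n \<bullet> x) * cos (kvec l \<bullet> x)))"
  by (simp_all only: phi_hex_eq_sum power_0 power_one_right power2_eq_square mult_1_left mult_1_right
      sum_product) (simp only: sum_distrib_left mult.assoc)

lemma tendsto_gaussian_mean_phi_hex_moments:
  assumes "k \<le> 2"
  shows "((\<lambda>R. gaussian_mean R (\<lambda>x. phi_hex x * phi_hex x ^ k)) \<longlongrightarrow> [0, 3/2, 3/2] ! k) at_top"
proof -
  have "((\<lambda>R. gaussian_mean R (\<lambda>x. phi_hex x * phi_hex x ^ 0)) \<longlongrightarrow> 0) at_top"
    using tendsto_gaussian_mean_cos_sum[where w = "\<lambda>i. 1" and p = kvec and I = "{..<3}"]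
    by (simp only: phi_hex_moment_expansions) (simp add: hex_eval_simps)
  moreover have "((\<lambda>R. gaussian_mean R (\<lambda>x. phi_hex x * phi_hex x ^ 1)) \<longlongrightarrow> 3/2) at_top"
    using tendsto_gaussian_mean_cos_cos_sum[where w = "\<lambda>i j. 1" and p = kvec and q = kvec
        and I = "{..<3}" and J = "{..<3}"]
    by (simp only: phi_hex_moment_expansions) (simp add: hex_eval_simps)
  moreover have "((\<lambda>R. gaussian_mean R (\<lambda>x. phi_hex x * phi_hex x ^ 2)) \<longlongrightarrow> 3/2) at_top"
    using tendsto_gaussian_mean_cos_cos_cos_sum[where w = "\<lambda>i j l. 1" and p = kvec and q = kvec
        and r = kvec and I = "{..<3}" and J = "{..<3}" and L = "{..<3}"]
    by (simp only: phi_hex_moment_expansions) (simp add: hex_eval_simps)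
  moreover have "k = 0 \<or> k = 1 \<or> k = 2"
    using assms by linarith
  ultimately show ?thesis
    by (elim disjE) simp_all
qed

lemma hex_trace_sq_mult_phi_hex:
  "hex_trace_sq x * phi_hex x = (\<Sum>m<3. \<Sum>n<3. \<Sum>l<3.
      (kvec m \<bullet> kvec n)\<^sup>2 * (cos (kvec m \<bullet> x) * cos (kvec n \<bullet> x) * cos (kvec l \<bullet> x)))"
  unfolding hex_trace_sq_def phi_hex_eq_sum
  by (simp only: sum_distrib_right) (simp only: sum_distrib_left mult.assoc)

lemma hex_grad_sq_mult_phi_hex:
  "hex_grad_sq x * phi_hex x = (\<Sum>m<3. \<Sum>n<3. \<Sum>l<3.
      (kvec m \<bullet> kvec n) ^ 3 * (sin (kvec m \<bullet> x) * sin (kvec n \<bullet> x) * cos (kvec l \<bullet> x)))"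
  unfolding hex_grad_sq_def phi_hex_eq_sum
  by (simp only: sum_distrib_right) (simp only: sum_distrib_left mult.assoc)

lemma tendsto_gaussian_mean_hex_trace_sq_moments:
  assumes "k \<le> 1"
  shows "((\<lambda>R. gaussian_mean R (\<lambda>x. hex_trace_sq x * phi_hex x ^ k)) \<longlongrightarrow> [3/2, 3/8] ! k) at_top"
proof -
  have "((\<lambda>R. gaussian_mean R (\<lambda>x. hex_trace_sq x * phi_hex x ^ 0)) \<longlongrightarrow> 3/2) at_top"
    using tendsto_gaussian_mean_cos_cos_sum[where w = "\<lambda>m n. (kvec m \<bullet> kvec n)\<^sup>2" and p = kvec
        and q = kvec and I = "{..<3}" and J = "{..<3}"]
    by (simp add: hex_trace_sq_def hex_eval_simps)
  moreover have "((\<lambda>R. gaussian_mean R (\<lambda>x. hex_trace_sq x * phi_hex x ^ 1)) \<longlongrightarrow> 3/8) at_top"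
    using tendsto_gaussian_mean_cos_cos_cos_sum[where w = "\<lambda>m n l. (kvec m \<bullet> kvec n)\<^sup>2" and p = kvec
        and q = kvec and r = kvec and I = "{..<3}" and J = "{..<3}" and L = "{..<3}"]
    by (simp add: hex_trace_sq_mult_phi_hex hex_eval_simps)
  moreover have "k = 0 \<or> k = 1"
    using assms by linarith
  ultimately show ?thesis
    by (elim disjE) simp_all
qed

lemma tendsto_gaussian_mean_hex_grad_sq_moments:
  assumes "k \<le> 1"
  shows "((\<lambda>R. gaussian_mean R (\<lambda>x. hex_grad_sq x * phi_hex x ^ k)) \<longlongrightarrow> [3/2, 3/16] ! k) at_top"
proof -
  have "((\<lambda>R. gaussian_mean R (\<lambda>x. hex_grad_sq x * phi_hex x ^ 0)) \<longlongrightarrow> 3/2) at_top"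
    using tendsto_gaussian_mean_sin_sin_sum[where w = "\<lambda>m n. (kvec m \<bullet> kvec n) ^ 3" and p = kvec
        and q = kvec and I = "{..<3}" and J = "{..<3}"]
    by (simp add: hex_grad_sq_def hex_eval_simps)
  moreover have "((\<lambda>R. gaussian_mean R (\<lambda>x. hex_grad_sq x * phi_hex x ^ 1)) \<longlongrightarrow> 3/16) at_top"
    using tendsto_gaussian_mean_sin_sin_cos_sum[where w = "\<lambda>m n l. (kvec m \<bullet> kvec n) ^ 3" and p = kvec
        and q = kvec and r = kvec and I = "{..<3}" and J = "{..<3}" and L = "{..<3}"]
    by (simp add: hex_grad_sq_mult_phi_hex hex_eval_simps)
  moreover have "k = 0 \<or> k = 1"
    using assms by linarith
  ultimately show ?thesis
    by (elim disjE) simp_all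
qed

lemma tendsto_gaussian_mean_hex_trace_cube:
  "((\<lambda>R. gaussian_mean R hex_trace_cube) \<longlongrightarrow> -3/16) at_top"
  using tendsto_gaussian_mean_cos_cos_cos_sum[where w = "\<lambda>m n l. (kvec m \<bullet> kvec n) * (kvec n \<bullet> kvec l)
      * (kvec l \<bullet> kvec m)" and p = kvec and q = kvec and r = kvec and I = "{..<3}" and J = "{..<3}"
      and L = "{..<3}"]
  by (simp add: hex_trace_cube_def[abs_def] hex_eval_simps)

(* The matrix H_f of a density proportional to exp (eps phi_hex x - rho |x|^2 / 2). *)
definition hex_H :: "real \<Rightarrow> real \<Rightarrow> 2 \<Rightarrow> 2 \<Rightarrow> real^2 \<Rightarrow> real" where
  "hex_H \<epsilon> \<rho> i j x = (\<Sum>m<3. \<epsilon> * (kvec m $ i * kvec m $ j) * cos (kvec m \<bullet> x)) + (if i = j then \<rho> else 0)"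

lemma hex_H_eq_trig_quadratic:
  "hex_H \<epsilon> \<rho> i j
     = trig_quadratic {..<3} kvec (\<lambda>m. \<epsilon> * (kvec m $ i * kvec m $ j)) (\<lambda>m. 0) 0 0 (if i = j then \<rho> else 0)"
  by (simp add: fun_eq_iff hex_H_def trig_quadratic_def)

lemma pd_hex_H:
  "pd k (hex_H \<epsilon> \<rho> i j) x = (\<Sum>m<3. - \<epsilon> * (kvec m $ i * kvec m $ j * kvec m $ k) * sin (kvec m \<bullet> x))"
  by (simp add: hex_H_eq_trig_quadratic pd_trig_quadratic trig_quadratic_def mult.assoc)

lemma sqrt_3_mult_sqrt_3: "sqrt 3 * (sqrt 3 * x) = 3 * (x::real)"
  by (simp add: mult.assoc[symmetric])

lemma sum_hex_H_diag: "(\<Sum>i\<in>UNIV. hex_H \<epsilon> \<rho> i i x) = \<epsilon> * phi_hex x + 2 * \<rho>"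
  unfolding hex_H_def phi_hex_eq_sum
  by (simp add: sum_2 sum_lessThan_3 power2_eq_square algebra_simps sqrt_3_mult_sqrt_3)

lemma sum_hex_H_sq:
  "(\<Sum>i\<in>UNIV. \<Sum>j\<in>UNIV. hex_H \<epsilon> \<rho> i j x * hex_H \<epsilon> \<rho> j i x)
     = \<epsilon>\<^sup>2 * hex_trace_sq x + 2 * \<epsilon> * \<rho> * phi_hex x + 2 * \<rho>\<^sup>2"
  unfolding hex_H_def hex_trace_sq_def phi_hex_eq_sum
  by (simp add: sum_2 sum_lessThan_3 power2_eq_square algebra_simps sqrt_3_mult_sqrt_3)

lemma sum_hex_H_cube:
  "(\<Sum>i\<in>UNIV. \<Sum>j\<in>UNIV. \<Sum>k\<in>UNIV. hex_H \<epsilon> \<rho> i j x * hex_H \<epsilon> \<rho> j k x * hex_H \<epsilon> \<rho> k i x)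
     = \<epsilon> ^ 3 * hex_trace_cube x + 3 * \<epsilon>\<^sup>2 * \<rho> * hex_trace_sq x + 3 * \<epsilon> * \<rho>\<^sup>2 * phi_hex x + 2 * \<rho> ^ 3"
  unfolding hex_H_def hex_trace_cube_def hex_trace_sq_def phi_hex_eq_sum
  by (simp add: sum_2 sum_lessThan_3 power2_eq_square power3_eq_cube algebra_simps sqrt_3_mult_sqrt_3)

lemma sum_pd_hex_H_sq:
  "(\<Sum>i\<in>UNIV. \<Sum>j\<in>UNIV. \<Sum>k\<in>UNIV. (pd k (hex_H \<epsilon> \<rho> i j) x)\<^sup>2) = \<epsilon>\<^sup>2 * hex_grad_sq x"
  unfolding pd_hex_H hex_grad_sq_def
  by (simp add: sum_2 sum_lessThan_3 power2_eq_square power3_eq_cube algebra_simps sqrt_3_mult_sqrt_3)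

section \<open>The densities Fdens\<close>

definition tilted_mean :: "real \<Rightarrow> real \<Rightarrow> (real^2 \<Rightarrow> real) \<Rightarrow> real" where
  "tilted_mean R \<epsilon> G = gaussian_mean R (\<lambda>x. G x * exp (\<epsilon> * phi_hex x))"

lemma tilted_mean_add:
  assumes "bounded_measurable f" "bounded_measurable g"
  shows "tilted_mean R \<epsilon> (\<lambda>x. f x + g x) = tilted_mean R \<epsilon> f + tilted_mean R \<epsilon> g"
  unfolding tilted_mean_def distrib_right
  by (intro gaussian_mean_add bounded_measurable_intros assms bounded_measurable_phi_hex)

lemma tilted_mean_cmult: "tilted_mean R \<epsilon> (\<lambda>x. c * f x) = c * tilted_mean R \<epsilon> f"
  unfolding tilted_mean_def mult.assoc by (rule gaussian_mean_cmult)

lemma tilted_mean_pos: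
  assumes "R > 0"
  shows "tilted_mean R \<epsilon> (\<lambda>x. 1) > 0"
proof -
  have bound: "- (3 * \<bar>\<epsilon>\<bar>) \<le> \<epsilon> * phi_hex x" for x
  proof -
    have "\<bar>\<epsilon> * phi_hex x\<bar> \<le> \<bar>\<epsilon>\<bar> * 3"
      unfolding abs_mult using abs_phi_hex_le by (rule mult_left_mono) simp
    then show ?thesis
      by (simp add: abs_le_iff)
  qed
  have "gaussian_mean R (\<lambda>x::real^2. exp (- 3 * \<bar>\<epsilon>\<bar>)) \<le> tilted_mean R \<epsilon> (\<lambda>x. 1)"
    unfolding tilted_mean_def
    by (rule gaussian_mean_mono)
      (auto intro!: bounded_measurable_intros bounded_measurable_phi_hex simp: bound assms)
  then show ?thesis
    using gaussian_mean_const[OF assms] exp_gt_zero less_le_trans by metis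
qed

lemma Zconst_eq_tilted_mean:
  assumes "R > 0"
  shows "Zconst R \<epsilon> = 2 * pi * R\<^sup>2 * tilted_mean R \<epsilon> (\<lambda>x. 1)"
proof -
  have "exp (\<epsilon> * phi_hex x - (norm x)\<^sup>2 / (2 * R\<^sup>2)) = exp (\<epsilon> * phi_hex x) * gaussian R x" for x
    by (simp add: gaussian_def exp_diff exp_minus field_simps)
  then show ?thesis
    using assms by (simp add: Zconst_def tilted_mean_def gaussian_mean_def power_mult_distrib)
qed

lemma integral_mult_Fdens:
  assumes "R > 0"
  shows "(\<integral>x. g x * Fdens R \<epsilon> x \<partial>lborel) = tilted_mean R \<epsilon> g / tilted_mean R \<epsilon> (\<lambda>x. 1)"
proof -
  have "g x * Fdens R \<epsilon> x = g x * exp (\<epsilon> * phi_hex x) * gaussian R x / Zconst R \<epsilon>" for x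
    by (simp add: Fdens_def gaussian_def exp_diff exp_minus field_simps)
  then show ?thesis
    using assms tilted_mean_pos[OF assms, of \<epsilon>]
    by (simp add: Zconst_eq_tilted_mean tilted_mean_def gaussian_mean_def power_mult_distrib)
qed

lemma Hf_Fdens:
  assumes "R > 0"
  shows "Hf (Fdens R \<epsilon>) = hex_H \<epsilon> (1 / R\<^sup>2)"
proof (intro ext)
  fix i j y
  have "(\<lambda>y. ln (Fdens R \<epsilon> y))
      = trig_quadratic {..<3} kvec (\<lambda>m. \<epsilon>) (\<lambda>m. 0) (- 1 / (2 * R\<^sup>2)) 0 (- ln (Zconst R \<epsilon>))"
    using tilted_mean_pos[OF assms, of \<epsilon>] assms
    by (simp add: fun_eq_iff Fdens_def ln_div Zconst_eq_tilted_mean trig_quadratic_def phi_hex_eq_sum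
        power2_norm_eq_inner sum_distrib_left)
  then have "pd i (pd j (\<lambda>y. ln (Fdens R \<epsilon> y))) = trig_quadratic {..<3} kvec
      (\<lambda>m. - \<epsilon> * kvec m $ j * kvec m $ i) (\<lambda>m. 0) 0 0 (if i = j then - 1 / R\<^sup>2 else 0)"
    by (simp add: pd_trig_quadratic axis_def)
  then show "Hf (Fdens R \<epsilon>) i j y = hex_H \<epsilon> (1 / R\<^sup>2) i j y"
    by (simp add: Hf_def hex_H_def trig_quadratic_def sum_negf mult_ac)
qed

lemma
  fixes R \<epsilon> :: real
  assumes "R > 0"
  defines "\<rho> \<equiv> 1 / R\<^sup>2" and "M \<equiv> tilted_mean R \<epsilon>"
  shows Ifun_Fdens: "Ifun (Fdens R \<epsilon>) = (\<epsilon> * M phi_hex + 2*\<rho> * M (\<lambda>x. 1)) / M (\<lambda>x. 1)"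
    and Qfun_Fdens: "Qfun (Fdens R \<epsilon>)
      = (\<epsilon>\<^sup>2 * M hex_trace_sq + 2*\<epsilon>*\<rho> * M phi_hex + 2*\<rho>\<^sup>2 * M (\<lambda>x. 1)) / M (\<lambda>x. 1)"
    and Dfun_Fdens: "Dfun (Fdens R \<epsilon>) = (\<epsilon>\<^sup>2 * M hex_grad_sq + 2*\<epsilon>^3 * M hex_trace_cube
      + 6*\<epsilon>\<^sup>2*\<rho> * M hex_trace_sq + 6*\<epsilon>*\<rho>\<^sup>2 * M phi_hex + 4*\<rho>^3 * M (\<lambda>x. 1)) / M (\<lambda>x. 1)"
proof -
  note linear = tilted_mean_add tilted_mean_cmult bounded_measurable_intros bounded_measurable_phi_hex
    bounded_measurable_hex_polys
  have "(\<lambda>x. \<epsilon> * phi_hex x + 2 * \<rho>) = (\<lambda>x. \<epsilon> * phi_hex x + 2*\<rho> * 1)"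
    by simp
  then show "Ifun (Fdens R \<epsilon>) = (\<epsilon> * M phi_hex + 2*\<rho> * M (\<lambda>x. 1)) / M (\<lambda>x. 1)"
    unfolding Ifun_def Hf_Fdens[OF assms(1)] sum_hex_H_diag integral_mult_Fdens[OF assms(1)]
    by (simp only: \<rho>_def M_def linear)
  have "(\<lambda>x. \<epsilon>\<^sup>2 * hex_trace_sq x + 2 * \<epsilon> * \<rho> * phi_hex x + 2 * \<rho>\<^sup>2)
      = (\<lambda>x. \<epsilon>\<^sup>2 * hex_trace_sq x + 2*\<epsilon>*\<rho> * phi_hex x + 2*\<rho>\<^sup>2 * 1)"
    by simp
  then show "Qfun (Fdens R \<epsilon>)
      = (\<epsilon>\<^sup>2 * M hex_trace_sq + 2*\<epsilon>*\<rho> * M phi_hex + 2*\<rho>\<^sup>2 * M (\<lambda>x. 1)) / M (\<lambda>x. 1)"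
    unfolding Qfun_def Hf_Fdens[OF assms(1)] sum_hex_H_sq integral_mult_Fdens[OF assms(1)]
    by (simp only: \<rho>_def M_def linear)
  have "(\<lambda>x. \<epsilon>\<^sup>2 * hex_grad_sq x + 2 * (\<epsilon> ^ 3 * hex_trace_cube x + 3 * \<epsilon>\<^sup>2 * \<rho> * hex_trace_sq x
        + 3 * \<epsilon> * \<rho>\<^sup>2 * phi_hex x + 2 * \<rho> ^ 3))
      = (\<lambda>x. \<epsilon>\<^sup>2 * hex_grad_sq x + 2*\<epsilon>^3 * hex_trace_cube x + 6*\<epsilon>\<^sup>2*\<rho> * hex_trace_sq x
        + 6*\<epsilon>*\<rho>\<^sup>2 * phi_hex x + 4*\<rho>^3 * 1)"
    by (simp add: algebra_simps)
  then show "Dfun (Fdens R \<epsilon>) = (\<epsilon>\<^sup>2 * M hex_grad_sq + 2*\<epsilon>^3 * M hex_trace_cube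
      + 6*\<epsilon>\<^sup>2*\<rho> * M hex_trace_sq + 6*\<epsilon>*\<rho>\<^sup>2 * M phi_hex + 4*\<rho>^3 * M (\<lambda>x. 1)) / M (\<lambda>x. 1)"
    unfolding Dfun_def Hf_Fdens[OF assms(1)] sum_pd_hex_H_sq sum_hex_H_cube integral_mult_Fdens[OF assms(1)]
    by (simp only: \<rho>_def M_def linear)
qed

lemma eventually_tilted_mean_estimates:
  assumes \<epsilon>: "0 < \<epsilon>" "\<epsilon> \<le> 1/3"
  shows "\<forall>\<^sub>F R in at_top.
     \<bar>tilted_mean R \<epsilon> phi_hex - \<epsilon> * (3/2 + 3*\<epsilon>/4)\<bar> \<le> 250 * \<epsilon> ^ 3 \<and>
     \<bar>tilted_mean R \<epsilon> hex_grad_sq - (3/2 + 3*\<epsilon>/16)\<bar> \<le> 250 * \<epsilon>\<^sup>2 \<and>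
     \<bar>tilted_mean R \<epsilon> hex_trace_sq - (3/2 + 3*\<epsilon>/8)\<bar> \<le> 250 * \<epsilon>\<^sup>2 \<and>
     \<bar>tilted_mean R \<epsilon> hex_trace_cube + 3/16\<bar> \<le> 250 * \<epsilon> \<and>
     \<bar>tilted_mean R \<epsilon> (\<lambda>x. 1) - 1\<bar> \<le> 250 * \<epsilon>"
proof -
  have small: "\<bar>\<epsilon>\<bar> * 3 \<le> 1"
    using \<epsilon> by simp
  note taylor = eventually_gaussian_mean_exp_taylor[OF _ _ bounded_measurable_phi_hex abs_phi_hex_le small]
  have "\<forall>\<^sub>F R in at_top. \<bar>tilted_mean R \<epsilon> phi_hex - \<epsilon> * (3/2 + 3*\<epsilon>/4)\<bar> \<le> 250 * \<epsilon> ^ 3"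
    using taylor[where n = 2 and \<delta> = "\<epsilon> ^ 3", OF bounded_measurable_phi_hex abs_phi_hex_le
        tendsto_gaussian_mean_phi_hex_moments] \<epsilon>
    by (auto elim!: eventually_mono simp: tilted_mean_def eval_nat_numeral field_simps)
  moreover have "\<forall>\<^sub>F R in at_top. \<bar>tilted_mean R \<epsilon> hex_grad_sq - (3/2 + 3*\<epsilon>/16)\<bar> \<le> 250 * \<epsilon>\<^sup>2"
    using taylor[where n = 1 and \<delta> = "\<epsilon>\<^sup>2", OF bounded_measurable_hex_polys(2) abs_hex_grad_sq_le
        tendsto_gaussian_mean_hex_grad_sq_moments] \<epsilon>
    by (auto elim!: eventually_mono simp: tilted_mean_def eval_nat_numeral field_simps)
  moreover have "\<forall>\<^sub>F R in at_top. \<bar>tilted_mean R \<epsilon> hex_trace_sq - (3/2 + 3*\<epsilon>/8)\<bar> \<le> 250 * \<epsilon>\<^sup>2"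
    using taylor[where n = 1 and \<delta> = "\<epsilon>\<^sup>2", OF bounded_measurable_hex_polys(1) abs_hex_trace_sq_le
        tendsto_gaussian_mean_hex_trace_sq_moments] \<epsilon>
    by (auto elim!: eventually_mono simp: tilted_mean_def eval_nat_numeral field_simps)
  moreover have "\<forall>\<^sub>F R in at_top. \<bar>tilted_mean R \<epsilon> hex_trace_cube + 3/16\<bar> \<le> 250 * \<epsilon>"
    using taylor[where n = 0 and \<delta> = \<epsilon> and m = "\<lambda>k. -3/16", OF bounded_measurable_hex_polys(3)
        abs_hex_trace_cube_le] tendsto_gaussian_mean_hex_trace_cube \<epsilon>
    by (auto elim!: eventually_mono simp: tilted_mean_def field_simps)
  moreover have "\<forall>\<^sub>F R in at_top. \<bar>tilted_mean R \<epsilon> (\<lambda>x. 1) - 1\<bar> \<le> 250 * \<epsilon>"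
    using taylor[where n = 0 and \<delta> = \<epsilon> and m = "\<lambda>k. 1" and B = 1 and G = "\<lambda>x. 1",
        OF bounded_measurable_const]
      tendsto_gaussian_mean_const[where 'a = "real^2", of 1] \<epsilon>
    by (auto elim!: eventually_mono simp: tilted_mean_def field_simps)
  ultimately show ?thesis
    by (simp add: eventually_conj_iff)
qed

lemma eventually_Fdens_inequality:
  assumes \<epsilon>: "0 < \<epsilon>" "\<epsilon> \<le> 1/100000"
  shows "\<forall>\<^sub>F R in at_top. Ifun (Fdens R \<epsilon>) * Dfun (Fdens R \<epsilon>) - (Qfun (Fdens R \<epsilon>))\<^sup>2 < 0"
proof -
  have "((\<lambda>R::real. 1 / R\<^sup>2) \<longlongrightarrow> 0) at_top"
    by real_asymp
  then have "\<forall>\<^sub>F R in at_top. 1 / R\<^sup>2 < \<epsilon> ^ 6"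
    using \<epsilon> by (simp add: order_tendsto_iff)
  moreover note eventually_gt_at_top[of 0]
  moreover have "\<epsilon> \<le> 1/3"
    using \<epsilon> by simp
  note eventually_tilted_mean_estimates[OF \<epsilon>(1) this]
  ultimately show ?thesis
  proof eventually_elim
    case (elim R)
    define \<rho> M where "\<rho> = 1 / R\<^sup>2" and "M = tilted_mean R \<epsilon>"
    define i d q where "i = \<epsilon> * M phi_hex + 2*\<rho> * M (\<lambda>x. 1)"
      and "d = \<epsilon>\<^sup>2 * M hex_grad_sq + 2*\<epsilon>^3 * M hex_trace_cube + 6*\<epsilon>\<^sup>2*\<rho> * M hex_trace_sq
        + 6*\<epsilon>*\<rho>\<^sup>2 * M phi_hex + 4*\<rho>^3 * M (\<lambda>x. 1)"
      and "q = \<epsilon>\<^sup>2 * M hex_trace_sq + 2*\<epsilon>*\<rho> * M phi_hex + 2*\<rho>\<^sup>2 * M (\<lambda>x. 1)"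
    have "Ifun (Fdens R \<epsilon>) * Dfun (Fdens R \<epsilon>) - (Qfun (Fdens R \<epsilon>))\<^sup>2 = (i * d - q\<^sup>2) / (M (\<lambda>x. 1))\<^sup>2"
      using elim unfolding i_def d_def q_def \<rho>_def M_def
      by (simp add: Ifun_Fdens Qfun_Fdens Dfun_Fdens power_divide diff_divide_distrib power2_eq_square)
    moreover have "i * d - q\<^sup>2 < 0"
      using elim \<epsilon> unfolding i_def d_def q_def \<rho>_def M_def by (intro moment_combination_neg) auto
    moreover have "M (\<lambda>x. 1) > 0"
      unfolding M_def using elim by (intro tilted_mean_pos) simp
    ultimately show ?case
      by (simp add: divide_neg_pos)
  qed
qed

theorem proposition4p2:
  shows "\<exists>\<epsilon>0>0. \<forall>\<epsilon>. 0 < \<epsilon> \<and> \<epsilon> < \<epsilon>0 \<longrightarrow>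
           (\<exists>R0. \<forall>R. R \<ge> R0 \<and> R > 0 \<longrightarrow>
              Ifun (Fdens R \<epsilon>) * Dfun (Fdens R \<epsilon>) - (Qfun (Fdens R \<epsilon>))\<^sup>2 < 0)"
proof (rule exI[of _ "1/100000"], intro conjI allI impI)
  fix \<epsilon> :: real
  assume "0 < \<epsilon> \<and> \<epsilon> < 1/100000"
  then have "\<forall>\<^sub>F R in at_top. Ifun (Fdens R \<epsilon>) * Dfun (Fdens R \<epsilon>) - (Qfun (Fdens R \<epsilon>))\<^sup>2 < 0"
    by (intro eventually_Fdens_inequality) auto
  then show "\<exists>R0. \<forall>R. R \<ge> R0 \<and> R > 0 \<longrightarrow>
      Ifun (Fdens R \<epsilon>) * Dfun (Fdens R \<epsilon>) - (Qfun (Fdens R \<epsilon>))\<^sup>2 < 0"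
    by (auto simp: eventually_at_top_linorder)
qed simp

end
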